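(* Let $G$ be a $(P_5,\text{chair})$-free graph and let $C=v_1v_2v_3v_4v_5v_1$ be an induced $C_5$ in $G$. Let $1\le i\le 5$, let $u,v\in S_4(i)$ with $uv\notin E(G)$, and let $s\in R_i=S^1_3(i+1)\cup S^1_3(i-1)\cup S^2_3(i)\cup S_4(i+1)\cup S_4(i-1)\cup S_5$. Then $s$ is adjacent to at least one of $u,v$.
   Context: All graphs are finite and simple; $P_5$ is the path on 5 vertices; the chair is a $P_4$ plus a vertex adjacent to exactly one of the two middle vertices of the $P_4$; "$H$-free" means no induced subgraph isomorphic to $H$. Indices modulo 5; for $v\notin V(C)$ let $N_C(v)=N(v)\cap V(C)$. $S^1_3(j)=\{v\notin V(C): N_C(v)=\{v_{j-1},v_j,v_{j+1}\}\}$, $S^2_3(j)=\{v\notin V(C): N_C(v)=\{v_{j-2},v_j,v_{j+2}\}\}$, $S_4(j)=\{v\notin V(C): N_C(v)=\{v_{j-2},v_{j-1},v_{j+1},v_{j+2}\}\}$, $S_5=\{v\notin V(C): N_C(v)=V(C)\}$. *)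

theory Defs
  imports Main
begin

definition simple_graph :: "'a set \<Rightarrow> ('a \<Rightarrow> 'a \<Rightarrow> bool) \<Rightarrow> bool" where
  "simple_graph V E \<longleftrightarrow> finite V \<and> (\<forall>x y. E x y \<longrightarrow> x \<in> V \<and> y \<in> V)
     \<and> (\<forall>x y. E x y \<longrightarrow> E y x) \<and> (\<forall>x. \<not> E x x)"

definition has_induced :: "'a set \<Rightarrow> ('a \<Rightarrow> 'a \<Rightarrow> bool) \<Rightarrow> nat \<Rightarrow> (nat \<Rightarrow> nat \<Rightarrow> bool) \<Rightarrow> bool" where
  "has_induced V E n H \<longleftrightarrow> (\<exists>f. inj_on f {0..<n} \<and> f ` {0..<n} \<subseteq> V \<and>
     (\<forall>i<n. \<forall>j<n. i \<noteq> j \<longrightarrow> (E (f i) (f j) \<longleftrightarrow> H i j)))"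

definition P5_edge :: "nat \<Rightarrow> nat \<Rightarrow> bool" where
  "P5_edge i j \<longleftrightarrow> i = j + 1 \<or> j = i + 1"

definition chair_edge :: "nat \<Rightarrow> nat \<Rightarrow> bool" where
  "chair_edge i j \<longleftrightarrow> {i, j} \<in> {{0,1},{1,2},{2,3},{1,4}}"

definition P5_chair_free :: "'a set \<Rightarrow> ('a \<Rightarrow> 'a \<Rightarrow> bool) \<Rightarrow> bool" where
  "P5_chair_free V E \<longleftrightarrow> \<not> has_induced V E 5 P5_edge \<and> \<not> has_induced V E 5 chair_edge"

text \<open>Cycle vertices v_j = C (j mod 5), with integer indices.\<close>
definition cv :: "(nat \<Rightarrow> 'a) \<Rightarrow> int \<Rightarrow> 'a" where
  "cv C j = C (nat (j mod 5))"

definition induced_C5 :: "'a set \<Rightarrow> ('a \<Rightarrow> 'a \<Rightarrow> bool) \<Rightarrow> (nat \<Rightarrow> 'a) \<Rightarrow> bool" where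
  "induced_C5 V E C \<longleftrightarrow> inj_on C {0..<5} \<and> C ` {0..<5} \<subseteq> V \<and>
     (\<forall>a<5. \<forall>b<5. E (C a) (C b) \<longleftrightarrow> (int b - int a) mod 5 \<in> {1, 4})"

definition NC :: "('a \<Rightarrow> 'a \<Rightarrow> bool) \<Rightarrow> (nat \<Rightarrow> 'a) \<Rightarrow> 'a \<Rightarrow> 'a set" where
  "NC E C x = {y \<in> C ` {0..<5}. E x y}"

definition outside :: "'a set \<Rightarrow> (nat \<Rightarrow> 'a) \<Rightarrow> 'a set" where
  "outside V C = V - C ` {0..<5}"

definition S13 :: "'a set \<Rightarrow> ('a \<Rightarrow> 'a \<Rightarrow> bool) \<Rightarrow> (nat \<Rightarrow> 'a) \<Rightarrow> int \<Rightarrow> 'a set" where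
  "S13 V E C j = {x \<in> outside V C. NC E C x = {cv C (j-1), cv C j, cv C (j+1)}}"

definition S23 :: "'a set \<Rightarrow> ('a \<Rightarrow> 'a \<Rightarrow> bool) \<Rightarrow> (nat \<Rightarrow> 'a) \<Rightarrow> int \<Rightarrow> 'a set" where
  "S23 V E C j = {x \<in> outside V C. NC E C x = {cv C (j-2), cv C j, cv C (j+2)}}"

definition S4 :: "'a set \<Rightarrow> ('a \<Rightarrow> 'a \<Rightarrow> bool) \<Rightarrow> (nat \<Rightarrow> 'a) \<Rightarrow> int \<Rightarrow> 'a set" where
  "S4 V E C j = {x \<in> outside V C. NC E C x = {cv C (j-2), cv C (j-1), cv C (j+1), cv C (j+2)}}"

definition S5 :: "'a set \<Rightarrow> ('a \<Rightarrow> 'a \<Rightarrow> bool) \<Rightarrow> (nat \<Rightarrow> 'a) \<Rightarrow> 'a set" where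
  "S5 V E C = {x \<in> outside V C. NC E C x = C ` {0..<5}}"

definition R :: "'a set \<Rightarrow> ('a \<Rightarrow> 'a \<Rightarrow> bool) \<Rightarrow> (nat \<Rightarrow> 'a) \<Rightarrow> int \<Rightarrow> 'a set" where
  "R V E C i = S13 V E C (i+1) \<union> S13 V E C (i-1) \<union> S23 V E C i \<union>
      S4 V E C (i+1) \<union> S4 V E C (i-1) \<union> S5 V E C"

end

theory Submission
  imports Defs
begin

text \<open>Both u and v see v(i+1) and v(i+2) but not v(i), while s sees v(i) and, if it sees v(i+1),
  also v(i+2). If s missed both u and v, then either u - v(i+2) - s - v(i) (when s sees v(i+2)) or
  u - v(i+1) - v(i) - s (otherwise), with v hanging at the second vertex, would be an induced chair.\<close>

lemma simple_graph_sym: "simple_graph V E \<Longrightarrow> E x y \<Longrightarrow> E y x"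
  unfolding simple_graph_def by blast

lemma all_less_5_iff: "(\<forall>i<(5::nat). P i) \<longleftrightarrow> P 0 \<and> P 1 \<and> P 2 \<and> P 3 \<and> P 4"
  by (auto simp: less_Suc_eq eval_nat_numeral)

lemma has_induced_chair:
  assumes G: "simple_graph V E" and in_V: "u \<in> V" "v \<in> V" "b \<in> V" "a \<in> V" "s \<in> V"
    and "u \<noteq> v"
    and edges: "E u b" "E v b" "E b a" "E a s"
    and non_edges: "\<not> E u v" "\<not> E u a" "\<not> E v a" "\<not> E u s" "\<not> E v s" "\<not> E b s"
  shows "has_induced V E 5 chair_edge"
proof -
  have sym: "\<And>x y. E x y \<Longrightarrow> E y x" and irrefl: "\<And>x. \<not> E x x"
    using G unfolding simple_graph_def by blast+
  have distinct: "u \<noteq> b" "v \<noteq> b" "b \<noteq> a" "a \<noteq> s" "u \<noteq> s" "u \<noteq> a" "v \<noteq> a" "v \<noteq> s" "b \<noteq> s"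
    using edges non_edges irrefl sym by metis+
  let ?f = "\<lambda>n. [u, b, a, s, v] ! n"
  have "inj_on ?f {0..<5}"
    unfolding inj_on_def using distinct \<open>u \<noteq> v\<close> by (auto simp: less_Suc_eq eval_nat_numeral)
  moreover have "?f ` {0..<5} \<subseteq> V"
    using in_V by (auto simp: less_Suc_eq eval_nat_numeral)
  moreover have "\<forall>i<5. \<forall>j<5. i \<noteq> j \<longrightarrow> (E (?f i) (?f j) \<longleftrightarrow> chair_edge i j)"
    unfolding all_less_5_iff chair_edge_def using edges non_edges sym by (auto simp: doubleton_eq_iff)
  ultimately show ?thesis
    unfolding has_induced_def by blast
qed

lemma adj_pair_if_chair_free:
  assumes G: "simple_graph V E" and no_chair: "\<not> has_induced V E 5 chair_edge"
    and in_V: "u \<in> V" "v \<in> V" "s \<in> V" "p \<in> V" "q \<in> V" "r \<in> V"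
    and "u \<noteq> v" "\<not> E u v"
    and "E q p" "\<not> E r p"
    and "E u q" "E v q" "E u r" "E v r" "\<not> E u p" "\<not> E v p"
    and "E s p" "E s q \<Longrightarrow> E s r"
  shows "E s u \<or> E s v"
proof (rule ccontr)
  assume "\<not> (E s u \<or> E s v)"
  then have "\<not> E u s" "\<not> E v s"
    using simple_graph_sym[OF G] by blast+
  have "has_induced V E 5 chair_edge"
  proof (cases "E s r")
    case True
    then show ?thesis
      using has_induced_chair[OF G, of u v r s p] assms \<open>\<not> E u s\<close> \<open>\<not> E v s\<close>
      by (auto dest: simple_graph_sym[OF G])
  next
    case False
    then show ?thesis
      using has_induced_chair[OF G, of u v q p s] assms \<open>\<not> E u s\<close> \<open>\<not> E v s\<close>
      by (auto dest: simple_graph_sym[OF G])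
  qed
  with no_chair show False ..
qed

lemma cv_adj_iff:
  assumes "induced_C5 V E C"
  shows "E (cv C a) (cv C b) \<longleftrightarrow> (b - a) mod 5 \<in> {1, 4}"
proof -
  have "nat (a mod 5) < 5" "nat (b mod 5) < 5" by auto
  with assms have "E (cv C a) (cv C b) \<longleftrightarrow> (b mod 5 - a mod 5) mod 5 \<in> {1, 4}"
    unfolding induced_C5_def cv_def by simp
  also have "(b mod 5 - a mod 5) mod 5 = (b - a) mod 5"
    by (simp add: mod_diff_eq)
  finally show ?thesis .
qed

lemma cv_eq_iff:
  assumes "induced_C5 V E C"
  shows "cv C a = cv C b \<longleftrightarrow> a mod 5 = b mod 5"
proof -
  have "inj_on C {0..<5}" "nat (a mod 5) \<in> {0..<5}" "nat (b mod 5) \<in> {0..<5}"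
    using assms unfolding induced_C5_def by auto
  then have "cv C a = cv C b \<longleftrightarrow> nat (a mod 5) = nat (b mod 5)"
    unfolding cv_def by (auto dest: inj_onD)
  then show ?thesis
    using eq_nat_nat_iff[of "a mod 5" "b mod 5"] by simp
qed

lemma cv_in_cycle: "cv C a \<in> C ` {0..<5}"
  unfolding cv_def by (rule imageI) auto

lemma cv_in_V: "induced_C5 V E C \<Longrightarrow> cv C a \<in> V"
  using cv_in_cycle[of C a] unfolding induced_C5_def by blast

lemma adj_cv_iff_NC:
  assumes "induced_C5 V E C" and "NC E C x = cv C ` P"
  shows "E x (cv C q) \<longleftrightarrow> (\<exists>p\<in>P. q mod 5 = p mod 5)"
proof -
  have "E x (cv C q) \<longleftrightarrow> cv C q \<in> NC E C x"
    unfolding NC_def using cv_in_cycle by blast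
  also have "\<dots> \<longleftrightarrow> (\<exists>p\<in>P. cv C q = cv C p)"
    using assms(2) by auto
  finally show ?thesis
    using cv_eq_iff[OF assms(1)] by simp
qed

lemma S4_adj:
  assumes C5: "induced_C5 V E C" and "u \<in> S4 V E C i"
  shows "u \<in> V" "E u (cv C (i+1))" "E u (cv C (i+2))" "\<not> E u (cv C i)"
proof -
  have "NC E C u = cv C ` {i-2, i-1, i+1, i+2}"
    using assms(2) unfolding S4_def by auto
  from adj_cv_iff_NC[OF C5 this] show "E u (cv C (i+1))" "E u (cv C (i+2))" "\<not> E u (cv C i)"
    by (simp_all add: mod_eq_dvd_iff)
  show "u \<in> V"
    using assms(2) unfolding S4_def outside_def by auto
qed

lemma R_adj:
  assumes C5: "induced_C5 V E C" and "s \<in> R V E C i"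
  shows "E s (cv C i)" "E s (cv C (i+1)) \<Longrightarrow> E s (cv C (i+2))"
proof -
  have "s \<in> S13 V E C (i+1) \<or> s \<in> S13 V E C (i-1) \<or> s \<in> S23 V E C i \<or>
      s \<in> S4 V E C (i+1) \<or> s \<in> S4 V E C (i-1) \<or> s \<in> S5 V E C"
    using assms(2) unfolding R_def by blast
  then have "E s (cv C i) \<and> (E s (cv C (i+1)) \<longrightarrow> E s (cv C (i+2)))"
  proof (elim disjE)
    assume "s \<in> S13 V E C (i+1)"
    then have "NC E C s = cv C ` {i+1-1, i+1, i+1+1}" unfolding S13_def by auto
    from adj_cv_iff_NC[OF C5 this] show ?thesis by (simp add: mod_eq_dvd_iff)
  next
    assume "s \<in> S13 V E C (i-1)"
    then have "NC E C s = cv C ` {i-1-1, i-1, i-1+1}" unfolding S13_def by auto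
    from adj_cv_iff_NC[OF C5 this] show ?thesis by (simp add: mod_eq_dvd_iff)
  next
    assume "s \<in> S23 V E C i"
    then have "NC E C s = cv C ` {i-2, i, i+2}" unfolding S23_def by auto
    from adj_cv_iff_NC[OF C5 this] show ?thesis by (simp add: mod_eq_dvd_iff)
  next
    assume "s \<in> S4 V E C (i+1)"
    then have "NC E C s = cv C ` {i+1-2, i+1-1, i+1+1, i+1+2}" unfolding S4_def by auto
    from adj_cv_iff_NC[OF C5 this] show ?thesis by (simp add: mod_eq_dvd_iff)
  next
    assume "s \<in> S4 V E C (i-1)"
    then have "NC E C s = cv C ` {i-1-2, i-1-1, i-1+1, i-1+2}" unfolding S4_def by auto
    from adj_cv_iff_NC[OF C5 this] show ?thesis by (simp add: mod_eq_dvd_iff)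
  next
    assume "s \<in> S5 V E C"
    then have "cv C j \<in> NC E C s" for j
      unfolding S5_def using cv_in_cycle by auto
    then show ?thesis
      unfolding NC_def by simp
  qed
  then show "E s (cv C i)" "E s (cv C (i+1)) \<Longrightarrow> E s (cv C (i+2))"
    by blast+
qed

theorem mainTheorem11:
  fixes V :: "'a set" and E :: "'a \<Rightarrow> 'a \<Rightarrow> bool" and C :: "nat \<Rightarrow> 'a"
    and i :: int and u v s :: 'a
  assumes "simple_graph V E"
    and "P5_chair_free V E"
    and "induced_C5 V E C"
    and "1 \<le> i" and "i \<le> 5"
    and "u \<in> S4 V E C i" and "v \<in> S4 V E C i" and "u \<noteq> v" and "\<not> E u v"
    and "s \<in> R V E C i"
  shows "E s u \<or> E s v"
proof -
  note C5 = \<open>induced_C5 V E C\<close>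
  have "\<not> has_induced V E 5 chair_edge"
    using \<open>P5_chair_free V E\<close> unfolding P5_chair_free_def by blast
  moreover have "s \<in> V"
    using \<open>s \<in> R V E C i\<close> unfolding R_def S13_def S23_def S4_def S5_def outside_def by auto
  moreover have "E (cv C (i+1)) (cv C i)" "\<not> E (cv C (i+2)) (cv C i)"
    using cv_adj_iff[OF C5] by simp_all
  ultimately show ?thesis
    using adj_pair_if_chair_free[OF \<open>simple_graph V E\<close>, where p = "cv C i" and q = "cv C (i+1)"
        and r = "cv C (i+2)"] cv_in_V[OF C5]
      S4_adj[OF C5 \<open>u \<in> S4 V E C i\<close>] S4_adj[OF C5 \<open>v \<in> S4 V E C i\<close>] R_adj[OF C5 \<open>s \<in> R V E C i\<close>]
      \<open>u \<noteq> v\<close> \<open>\<not> E u v\<close>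
    by blast
qed

end
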